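(* Let $k\ge1$ be an integer. Then $P_k(0,4,0)\not\equiv0\pmod p$ for every odd prime $p>k+2r-2$.
   Context: Fix an integer $r\ge1$ and indeterminates $\alpha,\beta,\gamma$. Define polynomials $c_n=c_n(\alpha,\beta,\gamma)\in\mathbb{Q}[\alpha,\beta,\gamma]$ by $c_n=0$ for $n<0$, $c_0=1$, and for every integer $n\ge-3$, $$(n+4)c_{n+4}+(2n+6-r)\alpha c_{n+3}+\left[(n+2-r)\alpha^2+(2n+5-2r)\frac{\alpha^2-\beta}{4}\right]c_{n+2}+\left[(2n+3-3r)\alpha\frac{\alpha^2-\beta}{4}+\frac{\gamma}{2}\right]c_{n+1}+\frac{1}{16}(\alpha^2-\beta)^2(n+1-2r)c_n=0.$$ For $k\ge1$ define $P_k(\alpha,\beta,\gamma):=\det\big(c_{k+2r-1+j-i}\big)_{1\le i,j\le k}$. $P_k(0,4,0)$ is its value at $\alpha=0,\beta=4,\gamma=0$, a rational number; $x\not\equiv0\pmod p$ means $x$ has denominator prime to $p$ and $x\notin p\mathbb{Z}_{(p)}$. *)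

theory Defs
  imports "Jordan_Normal_Form.Determinant"
begin

text \<open>The polynomials c_n, evaluated at (alpha, beta, gamma) = (a, b, g) in Q^3.
  Equation for index N = m+1 = n+4 (n = m - 3 >= -3):
  N c_N + (2n+6-r) a c_(N-1) + [(n+2-r) a^2 + (2n+5-2r)(a^2-b)/4] c_(N-2)
   + [(2n+3-3r) a (a^2-b)/4 + g/2] c_(N-3) + (1/16)(a^2-b)^2 (n+1-2r) c_(N-4) = 0,
  with c_j = 0 for j < 0 and c_0 = 1.\<close>

fun cseq :: "nat \<Rightarrow> rat \<Rightarrow> rat \<Rightarrow> rat \<Rightarrow> nat \<Rightarrow> rat" where
  "cseq r a b g 0 = 1"
| "cseq r a b g (Suc m) =
     - ( (2 * (of_int (int m) - 3) + 6 - of_nat r) * a * cseq r a b g m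
       + (if 1 \<le> m then
            ((of_int (int m) - 3 + 2 - of_nat r) * a^2
              + (2 * (of_int (int m) - 3) + 5 - 2 * of_nat r) * ((a^2 - b) / 4))
            * cseq r a b g (m - 1) else 0)
       + (if 2 \<le> m then
            ((2 * (of_int (int m) - 3) + 3 - 3 * of_nat r) * a * ((a^2 - b) / 4) + g / 2)
            * cseq r a b g (m - 2) else 0)
       + (if 3 \<le> m then
            (1/16) * (a^2 - b)^2 * (of_int (int m) - 3 + 1 - 2 * of_nat r)
            * cseq r a b g (m - 3) else 0)
       ) / of_nat (Suc m)"

definition cc :: "nat \<Rightarrow> rat \<Rightarrow> rat \<Rightarrow> rat \<Rightarrow> int \<Rightarrow> rat" where
  "cc r a b g n = (if n < 0 then 0 else cseq r a b g (nat n))"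

text \<open>P_k(a,b,g) = det (c_(k+2r-1+j-i))_(1<=i,j<=k) (0-based indices here; only j-i matters).\<close>
definition Pk :: "nat \<Rightarrow> nat \<Rightarrow> rat \<Rightarrow> rat \<Rightarrow> rat \<Rightarrow> rat" where
  "Pk r k a b g = det (mat k k (\<lambda>(i, j). cc r a b g (int k + 2 * int r - 1 + int j - int i)))"

definition nonzero_mod :: "nat \<Rightarrow> rat \<Rightarrow> bool" where
  "nonzero_mod p x = (case quotient_of x of (u, v) \<Rightarrow> \<not> int p dvd u \<and> \<not> int p dvd v)"

end

(*
  At (alpha, beta, gamma) = (0, 4, 0) the recurrence collapses to
  (n+1) c_(n+1) = (2n-1-2r) c_(n-1) - (n-2-2r) c_(n-3), which is solved by the
  coefficients of (1 - t^2)^(r - 1/2): c_(2j) = (-1)^j binom(r - 1/2, j) and c_n = 0 for odd n.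
  Hence the Toeplitz matrix (c_(N+j-i)), N = k + 2r - 1, vanishes off a checkerboard, and
  ordering rows by parity and columns by the parity of N + j makes it block diagonal. Each
  block is a Toeplitz matrix of signed binomials binom(x, b+j-i) with x = r - 1/2; multiplying
  it by the Pascal matrix and using Vandermonde's convolution shows that its determinant is
  +-prod_i binom(x+i, b) / prod_j binom(b+j, b). For p > k + 2r - 2 every binom(x+i, b) is a
  product of numbers (odd integer of absolute value < p)/2 divided by b! with b < p, and every
  binom(b+j, b) has b + j < p, so all factors are p-adic units.
*)

theory Submission
  imports Defs "HOL-Computational_Algebra.Formal_Power_Series" "HOL-Computational_Algebra.Primes"
begin

section \<open>Units of the localisation of the integers at p\<close>

text \<open>Unlike \<open>nonzero_mod\<close>, this notion does not refer to the reduced fraction, so it is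
  visibly closed under products and quotients.\<close>

definition p_unit :: "nat \<Rightarrow> rat \<Rightarrow> bool" where
  "p_unit p x \<longleftrightarrow> (\<exists>u v. x = of_int u / of_int v \<and> \<not> int p dvd u \<and> \<not> int p dvd v)"

lemma p_unit_imp_nonzero_mod:
  assumes p: "prime p" and x: "p_unit p x"
  shows "nonzero_mod p x"
proof -
  obtain u v where uv: "x = of_int u / of_int v" "\<not> int p dvd u" "\<not> int p dvd v"
    using x unfolding p_unit_def by blast
  obtain a b where q: "quotient_of x = (a, b)" by fastforce
  have "v \<noteq> 0" using uv(3) by auto
  then have "u * b = a * v"
    using uv(1) quotient_of_div[OF q] quotient_of_denom_pos[OF q]
    by (simp add: frac_eq_eq) (metis of_int_eq_iff of_int_mult mult.commute)
  moreover have p_int: "prime (int p)" using p by simp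
  ultimately have "int p dvd a \<longleftrightarrow> int p dvd b"
    using uv(2,3) by (metis prime_dvd_mult_iff)
  moreover have "\<not> (int p dvd a \<and> int p dvd b)"
    using quotient_of_coprime[OF q] p_int by (meson coprime_common_divisor not_prime_unit)
  ultimately show ?thesis unfolding nonzero_mod_def q by auto
qed

lemma p_unit_mult:
  assumes "prime p" "p_unit p x" "p_unit p y"
  shows "p_unit p (x * y)"
proof -
  obtain u v where "x = of_int u / of_int v" "\<not> int p dvd u" "\<not> int p dvd v"
    using assms(2) unfolding p_unit_def by blast
  moreover obtain u' v' where "y = of_int u' / of_int v'" "\<not> int p dvd u'" "\<not> int p dvd v'"
    using assms(3) unfolding p_unit_def by blast
  moreover have "prime (int p)" using assms(1) by simp
  ultimately show ?thesis
    unfolding p_unit_def by (intro exI[of _ "u * u'"] exI[of _ "v * v'"]) (simp add: prime_dvd_mult_iff)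
qed

lemma p_unit_inverse: "p_unit p x \<Longrightarrow> p_unit p (inverse x)"
  unfolding p_unit_def by (metis inverse_divide)

lemma p_unit_divide: "prime p \<Longrightarrow> p_unit p x \<Longrightarrow> p_unit p y \<Longrightarrow> p_unit p (x / y)"
  by (simp add: divide_inverse p_unit_mult p_unit_inverse)

lemma p_unit_of_int:
  assumes "prime p" "z \<noteq> 0" "\<bar>z\<bar> < int p"
  shows "p_unit p (of_int z)"
proof -
  have "\<not> int p dvd z"
  proof
    assume "int p dvd z"
    then have "\<bar>int p\<bar> \<le> \<bar>z\<bar>" using dvd_imp_le_int assms(2) by blast
    then show False using assms(3) by simp
  qed
  moreover have "\<not> int p dvd 1" using prime_gt_1_nat[OF assms(1)] by simp
  ultimately show ?thesis unfolding p_unit_def by (intro exI[of _ z] exI[of _ 1]) simp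
qed

lemma p_unit_one: "prime p \<Longrightarrow> p_unit p 1"
  using p_unit_of_int[of p 1] prime_gt_1_nat[of p] by simp

lemma p_unit_prod:
  assumes "prime p" "\<And>i. i \<in> A \<Longrightarrow> p_unit p (f i)"
  shows "p_unit p (\<Prod>i\<in>A. f i)"
  using assms(2)
proof (induction A rule: infinite_finite_induct)
  case (insert i A)
  then show ?case by (simp add: p_unit_mult assms(1))
qed (simp_all add: p_unit_one assms(1))

lemma p_unit_minus_one_power: "prime p \<Longrightarrow> p_unit p ((-1) ^ n)"
  using p_unit_of_int[of p 1] p_unit_of_int[of p "-1"] prime_gt_1_nat[of p]
  by (cases "even n") simp_all

lemma p_unit_signof: "prime p \<Longrightarrow> p_unit p (signof \<sigma>)"
  using p_unit_of_int[of p 1] p_unit_of_int[of p "-1"] prime_gt_1_nat[of p]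
  by (cases \<sigma> rule: sign_cases) simp_all

lemma p_unit_of_nat_not_dvd: "prime p \<Longrightarrow> \<not> p dvd n \<Longrightarrow> p_unit p (of_nat n)"
  using p_unit_of_int[of p 1] prime_gt_1_nat[of p] unfolding p_unit_def
  by (intro exI[of _ "int n"] exI[of _ 1]) auto

lemma p_unit_fact: "prime p \<Longrightarrow> n < p \<Longrightarrow> p_unit p (fact n)"
  by (metis of_nat_fact p_unit_of_nat_not_dvd prime_dvd_fact_iff not_le)

lemma p_unit_binomial:
  assumes "prime p" "k \<le> n" "n < p"
  shows "p_unit p (of_nat (n choose k))"
proof -
  have "fact k * fact (n - k) * (n choose k) = fact n" using binomial_fact_lemma[OF assms(2)] .
  moreover have "\<not> p dvd fact n" using prime_dvd_fact_iff[OF assms(1)] assms(3) by simp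
  ultimately have "\<not> p dvd (n choose k)" by (metis dvd_mult)
  then show ?thesis using p_unit_of_nat_not_dvd assms(1) by blast
qed

lemma p_unit_gbinomial_half:
  assumes p: "prime p" "odd p" and a: "odd a" and "b < p"
    and small: "\<And>t. t < b \<Longrightarrow> \<bar>a - 2 * int t\<bar> < int p"
  shows "p_unit p ((of_int a / 2) gchoose b)"
proof -
  have "(of_int a / 2 :: rat) gchoose b = (\<Prod>t = 0..<b. of_int a / 2 - of_nat t) / fact b"
    by (simp add: gbinomial_prod_rev)
  also have "\<dots> = (\<Prod>t = 0..<b. of_int (a - 2 * int t) / 2) / fact b"
    by (intro arg_cong2[where f = "(/)"] prod.cong) (simp_all add: field_simps)
  finally have "(of_int a / 2 :: rat) gchoose b = (\<Prod>t = 0..<b. of_int (a - 2 * int t) / 2) / fact b" .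
  moreover have "p_unit p (of_int (a - 2 * int t) / 2)" if "t < b" for t
  proof (rule p_unit_divide[OF p(1)])
    have "a - 2 * int t \<noteq> 0" using a by presburger
    then show "p_unit p (of_int (a - 2 * int t))" using p_unit_of_int[OF p(1)] small[OF that] by blast
    have "2 < p" using prime_ge_2_nat[OF p(1)] p(2) by (cases "p = 2") auto
    then show "p_unit p (2 :: rat)" using p_unit_of_int[OF p(1), of 2] by simp
  qed
  then have "p_unit p (\<Prod>t = 0..<b. of_int (a - 2 * int t) / 2)"
    by (intro p_unit_prod[OF p(1)]) simp
  ultimately show ?thesis
    using p_unit_divide[OF p(1) _ p_unit_fact[OF p(1) \<open>b < p\<close>]] by simp
qed

section \<open>Determinants of permuted block-diagonal matrices\<close>

lemma det_scale_rows_cols: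
  fixes M :: "'a :: comm_ring_1 mat"
  assumes M: "M \<in> carrier_mat n n"
  shows "det (mat n n (\<lambda>(i,j). f i * g j * M $$ (i,j))) = (\<Prod>i<n. f i) * (\<Prod>j<n. g j) * det M"
proof -
  have "det (mat n n (\<lambda>(i,j). f i * g j * M $$ (i,j))) =
    (\<Sum>\<pi> | \<pi> permutes {0..<n}. signof \<pi> * (\<Prod>i = 0..<n. f i * g (\<pi> i) * M $$ (i, \<pi> i)))"
    by (subst det_def'[of _ n]) (auto intro!: sum.cong prod.cong simp: permutes_in_image)
  also have "\<dots> = (\<Sum>\<pi> | \<pi> permutes {0..<n}.
      (\<Prod>i<n. f i) * (\<Prod>j<n. g j) * (signof \<pi> * (\<Prod>i = 0..<n. M $$ (i, \<pi> i))))"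
  proof (rule sum.cong[OF refl])
    fix \<pi> assume "\<pi> \<in> {\<pi>. \<pi> permutes {0..<n}}"
    then have "(\<Prod>i = 0..<n. g (\<pi> i)) = (\<Prod>i = 0..<n. g i)"
      using prod.permute[of \<pi> "{0..<n}" g] by (simp add: comp_def)
    then show "signof \<pi> * (\<Prod>i = 0..<n. f i * g (\<pi> i) * M $$ (i, \<pi> i)) =
      (\<Prod>i<n. f i) * (\<Prod>j<n. g j) * (signof \<pi> * (\<Prod>i = 0..<n. M $$ (i, \<pi> i)))"
      by (simp add: prod.distrib atLeast0LessThan)
  qed
  also have "\<dots> = (\<Prod>i<n. f i) * (\<Prod>j<n. g j) * det M"
    by (subst det_def'[OF M]) (simp add: sum_distrib_left)
  finally show ?thesis .
qed

lemma det_permute_rows_cols: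
  fixes A :: "'a :: comm_ring_1 mat"
  assumes A: "A \<in> carrier_mat n n" and \<sigma>: "\<sigma> permutes {0..<n}" and \<tau>: "\<tau> permutes {0..<n}"
  shows "det (mat n n (\<lambda>(i,j). A $$ (\<sigma> i, \<tau> j))) = signof \<sigma> * signof \<tau> * det A"
proof -
  define B where "B = mat n n (\<lambda>(i,j). A $$ (\<sigma> i, j))"
  have B: "B \<in> carrier_mat n n" unfolding B_def by simp
  have perm_less: "\<sigma> i < n" "\<tau> i < n" if "i < n" for i
    using that permutes_in_image[OF \<sigma>] permutes_in_image[OF \<tau>] by auto
  define C where "C = mat n n (\<lambda>(j,i). transpose_mat B $$ (\<tau> j, i))"
  have "mat n n (\<lambda>(i,j). A $$ (\<sigma> i, \<tau> j)) = transpose_mat C"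
    by (rule eq_matI) (auto simp: B_def C_def perm_less)
  then have "det (mat n n (\<lambda>(i,j). A $$ (\<sigma> i, \<tau> j))) = det C"
    using det_transpose[of C n] by (simp add: C_def)
  also have "\<dots> = signof \<tau> * det (transpose_mat B)"
    unfolding C_def using B by (intro det_permute_rows[OF _ \<tau>]) simp
  also have "\<dots> = signof \<tau> * (signof \<sigma> * det A)"
    using det_transpose[OF B] det_permute_rows[OF A \<sigma>] by (simp add: B_def)
  finally show ?thesis by simp
qed

lemma det_permuted_block_diagonal:
  fixes A :: "'a :: idom mat"
  assumes A: "A \<in> carrier_mat k k" and \<sigma>: "\<sigma> permutes {0..<k}" and \<tau>: "\<tau> permutes {0..<k}"
    and B: "B \<in> carrier_mat h h" and C: "C \<in> carrier_mat (k - h) (k - h)" and "h \<le> k"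
    and blocks: "\<And>i j. i < k \<Longrightarrow> j < k \<Longrightarrow> A $$ (\<sigma> i, \<tau> j) =
      (if i < h then if j < h then B $$ (i, j) else 0 else if j < h then 0 else C $$ (i - h, j - h))"
  shows "det A = signof \<sigma> * signof \<tau> * det B * det C"
proof -
  have "mat k k (\<lambda>(i,j). A $$ (\<sigma> i, \<tau> j)) = four_block_mat B (0\<^sub>m h (k - h)) (0\<^sub>m (k - h) h) C"
    by (rule eq_matI) (use B C \<open>h \<le> k\<close> in \<open>simp_all add: blocks\<close>)
  then have block_det: "signof \<sigma> * signof \<tau> * det A = det B * det C"
    using det_permute_rows_cols[OF A \<sigma> \<tau>] det_four_block_mat_upper_right_zero[OF B refl _ C] by simp
  have sign_square: "signof \<pi> * signof \<pi> = (1 :: 'a)" for \<pi> :: "nat \<Rightarrow> nat"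
    by (simp add: sign_def)
  have "det A = (signof \<sigma> * signof \<sigma>) * (signof \<tau> * signof \<tau>) * det A"
    by (simp only: sign_square mult_1)
  also have "\<dots> = signof \<sigma> * signof \<tau> * (signof \<sigma> * signof \<tau> * det A)"
    by (simp only: mult_ac)
  also have "\<dots> = signof \<sigma> * signof \<tau> * (det B * det C)"
    by (simp only: block_det)
  finally show ?thesis by (simp only: mult.assoc)
qed

text \<open>For \<open>c \<in> {0, 1}\<close>: first the indices \<open>u < k\<close> with \<open>u \<equiv> c (mod 2)\<close>, then the others,
  each in increasing order.\<close>

definition parity_sort :: "nat \<Rightarrow> nat \<Rightarrow> nat \<Rightarrow> nat" where
  "parity_sort c k u =
    (if u < (k + 1 - c) div 2 then 2 * u + c else if u < k then 2 * (u - (k + 1 - c) div 2) + 1 - c else u)"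

lemma parity_sort_permutes:
  assumes "c \<le> 1"
  shows "parity_sort c k permutes {0..<k}"
proof (rule bij_imp_permutes)
  define h where "h = (k + 1 - c) div 2"
  have f: "parity_sort c k u = (if u < h then 2 * u + c else if u < k then 2 * (u - h) + 1 - c else u)" for u
    unfolding parity_sort_def h_def ..
  have h_bounds: "k \<le> 2 * h + c" "2 * h + c \<le> k + 1"
    using assms unfolding h_def by presburger+
  have "parity_sort c k u < k" if "u < k" for u
    using that h_bounds unfolding f by (cases "u < h") simp_all
  moreover have "u = v" if "u < k" "v < k" "parity_sort c k u = parity_sort c k v" for u v
  proof -
    have "even (parity_sort c k w) \<longleftrightarrow> (w < h \<longleftrightarrow> c = 0)" if "w < k" for w
      using that assms unfolding f by (cases "w < h"; cases "c = 0") auto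
    then have "u < h \<longleftrightarrow> v < h" using that by metis
    then show "u = v"
    proof (cases "u < h")
      case False
      then have "2 * (u - h) + 1 - c = 2 * (v - h) + 1 - c"
        using that \<open>u < h \<longleftrightarrow> v < h\<close> unfolding f by simp
      then show ?thesis using False \<open>u < h \<longleftrightarrow> v < h\<close> assms by arith
    qed (use that in \<open>simp add: f\<close>)
  qed
  ultimately show "bij_betw (parity_sort c k) {0..<k} {0..<k}"
    by (intro bij_betw_imageI inj_onI endo_inj_surj) (auto simp: inj_on_def image_subset_iff)
qed (simp add: parity_sort_def)

lemma parity_sort_index:
  assumes "odd (N + k)" "k \<le> N + 1" "i < k" "j < k"
  defines "h \<equiv> (k + 1) div 2" and "e \<equiv> N + parity_sort (N mod 2) k j - parity_sort 0 k i"
  shows "even e \<longleftrightarrow> (i < h \<longleftrightarrow> j < h)"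
    and "i < h \<Longrightarrow> j < h \<Longrightarrow> e div 2 = (N + 1) div 2 + j - i"
    and "\<not> i < h \<Longrightarrow> \<not> j < h \<Longrightarrow> e div 2 = N div 2 + (j - h) - (i - h)"
proof -
  have row: "parity_sort 0 k i = (if i < h then 2 * i else 2 * (i - h) + 1)"
    using assms(3) by (simp add: parity_sort_def h_def)
  have "(k + 1 - N mod 2) div 2 = h" using assms(1) unfolding h_def by presburger
  then have col: "parity_sort (N mod 2) k j = (if j < h then 2 * j + N mod 2 else 2 * (j - h) + 1 - N mod 2)"
    using assms(4) by (simp add: parity_sort_def)
  have k: "k + 1 = 2 * h + N mod 2" using assms(1) unfolding h_def by presburger
  obtain m where N: "N = 2 * m + N mod 2" by (metis div_mult_mod_eq mult.commute)
  have "N mod 2 = 0 \<or> N mod 2 = 1" by presburger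
  then show "even e \<longleftrightarrow> (i < h \<longleftrightarrow> j < h)"
    and "i < h \<Longrightarrow> j < h \<Longrightarrow> e div 2 = (N + 1) div 2 + j - i"
    and "\<not> i < h \<Longrightarrow> \<not> j < h \<Longrightarrow> e div 2 = N div 2 + (j - h) - (i - h)"
    using assms(2-4) k N unfolding e_def row col by (auto; presburger)+
qed

lemma det_parity_toeplitz:
  fixes d :: "nat \<Rightarrow> 'a :: idom"
  assumes "odd (N + k)" "k \<le> N + 1"
  defines "h \<equiv> (k + 1) div 2"
  shows "det (mat k k (\<lambda>(i,j). if even (N + j - i) then d ((N + j - i) div 2) else 0)) =
    signof (parity_sort 0 k) * signof (parity_sort (N mod 2) k) *
    det (mat h h (\<lambda>(u,v). d ((N + 1) div 2 + v - u))) *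
    det (mat (k - h) (k - h) (\<lambda>(u,v). d (N div 2 + v - u)))"
proof (rule det_permuted_block_diagonal)
  show "parity_sort 0 k permutes {0..<k}" "parity_sort (N mod 2) k permutes {0..<k}"
    by (simp_all add: parity_sort_permutes)
  fix i j assume ij: "i < k" "j < k"
  then have "parity_sort 0 k i < k" "parity_sort (N mod 2) k j < k"
    using permutes_in_image[OF parity_sort_permutes] by simp_all
  then show "mat k k (\<lambda>(i,j). if even (N + j - i) then d ((N + j - i) div 2) else 0)
      $$ (parity_sort 0 k i, parity_sort (N mod 2) k j) =
    (if i < h then if j < h then mat h h (\<lambda>(u,v). d ((N + 1) div 2 + v - u)) $$ (i, j) else 0
     else if j < h then 0 else mat (k - h) (k - h) (\<lambda>(u,v). d (N div 2 + v - u)) $$ (i - h, j - h))"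
    using parity_sort_index[OF assms(1,2) ij] ij by (simp add: h_def)
qed (simp_all add: h_def)

section \<open>Toeplitz matrices of binomial coefficients\<close>

definition pascal_mat :: "nat \<Rightarrow> 'a :: comm_ring_1 mat" where
  "pascal_mat n = mat n n (\<lambda>(i,j). of_nat (i choose j))"

text \<open>The guard makes \<open>binomial_toeplitz x 0 n\<close> upper unitriangular despite truncated
  subtraction; it is vacuous when \<open>n \<le> b + 1\<close>.\<close>

definition binomial_toeplitz :: "'a :: field_char_0 \<Rightarrow> nat \<Rightarrow> nat \<Rightarrow> 'a mat" where
  "binomial_toeplitz x b n = mat n n (\<lambda>(i,j). if i \<le> b + j then x gchoose (b + j - i) else 0)"

lemma det_pascal_mat: "det (pascal_mat n) = 1"
proof -
  have "det (pascal_mat n) = prod_list (diag_mat (pascal_mat n))"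
    by (rule det_lower_triangular[of n]) (simp_all add: pascal_mat_def binomial_eq_0)
  then show ?thesis by (simp add: pascal_mat_def prod_list_diag_prod)
qed

lemma det_binomial_toeplitz_0: "det (binomial_toeplitz x 0 n) = 1"
  using det_upper_triangular[of "binomial_toeplitz x 0 n" n]
  by (simp add: binomial_toeplitz_def upper_triangular_def prod_list_diag_prod)

lemma pascal_mat_mult_binomial_toeplitz:
  "pascal_mat n * binomial_toeplitz x b n = mat n n (\<lambda>(i,j). (x + of_nat i) gchoose (b + j))"
proof (rule eq_matI)
  fix i j assume "i < dim_row (mat n n (\<lambda>(i,j). (x + of_nat i) gchoose (b + j)))"
    and "j < dim_col (mat n n (\<lambda>(i,j). (x + of_nat i) gchoose (b + j)))"
  then have i: "i < n" and j: "j < n" by auto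
  define g where "g l = of_nat (i choose l) * (if l \<le> b + j then x gchoose (b + j - l) else 0)" for l
  have "(pascal_mat n * binomial_toeplitz x b n) $$ (i,j) = sum g {..<n}"
    using i j by (simp add: pascal_mat_def binomial_toeplitz_def scalar_prod_def g_def
        atLeast0LessThan)
  also have "\<dots> = sum g {..n + b + j}"
    using i by (intro sum.mono_neutral_left) (auto simp: g_def)
  also have "\<dots> = sum g {..b + j}"
    by (intro sum.mono_neutral_right) (auto simp: g_def)
  also have "\<dots> = (\<Sum>l = 0..b + j. (of_nat i gchoose l) * (x gchoose (b + j - l)))"
    by (intro sum.cong) (auto simp: g_def binomial_gbinomial)
  also have "\<dots> = (x + of_nat i) gchoose (b + j)"
    by (simp add: gbinomial_Vandermonde add.commute)
  finally show "(pascal_mat n * binomial_toeplitz x b n) $$ (i,j) =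
      mat n n (\<lambda>(i,j). (x + of_nat i) gchoose (b + j)) $$ (i,j)"
    using i j by simp
qed (simp_all add: pascal_mat_def binomial_toeplitz_def)

lemma gbinomial_add_split:
  fixes y :: "'a :: field_char_0"
  shows "y gchoose (b + j) = (y gchoose b) * ((y - of_nat b) gchoose j) / of_nat (b + j choose b)"
proof -
  have "(y gchoose (b + j)) * of_nat (b + j choose b) = (y gchoose b) * ((y - of_nat b) gchoose j)"
    using gbinomial_trinomial_revision[of b "b + j" y] by (simp add: binomial_gbinomial)
  moreover have "(of_nat (b + j choose b) :: 'a) \<noteq> 0" by simp
  ultimately show ?thesis by (simp add: eq_divide_eq)
qed

lemma det_binomial_toeplitz:
  "det (binomial_toeplitz x b n) = (\<Prod>i<n. (x + of_nat i) gchoose b) / (\<Prod>j<n. of_nat (b + j choose b))"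
proof -
  have pascal: "pascal_mat n \<in> carrier_mat n n" by (simp add: pascal_mat_def)
  have toeplitz: "binomial_toeplitz y c n \<in> carrier_mat n n" for y :: 'a and c
    by (simp add: binomial_toeplitz_def)
  have "det (binomial_toeplitz x b n) = det (pascal_mat n * binomial_toeplitz x b n)"
    by (simp add: det_mult[OF pascal toeplitz] det_pascal_mat)
  also have "pascal_mat n * binomial_toeplitz x b n = mat n n (\<lambda>(i,j). (x + of_nat i) gchoose (b + j))"
    by (rule pascal_mat_mult_binomial_toeplitz)
  also have "mat n n (\<lambda>(i,j). (x + of_nat i) gchoose (b + j)) =
      mat n n (\<lambda>(i,j). ((x + of_nat i) gchoose b) * (1 / of_nat (b + j choose b)) *
        (pascal_mat n * binomial_toeplitz (x - of_nat b) 0 n) $$ (i,j))"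
    by (rule eq_matI) (simp_all add: pascal_mat_mult_binomial_toeplitz gbinomial_add_split[of "x + _"] diff_add_eq)
  also have "det \<dots> = (\<Prod>i<n. (x + of_nat i) gchoose b) * (\<Prod>j<n. 1 / of_nat (b + j choose b)) *
      det (pascal_mat n * binomial_toeplitz (x - of_nat b) 0 n)"
    using pascal toeplitz by (intro det_scale_rows_cols mult_carrier_mat)
  also have "det (pascal_mat n * binomial_toeplitz (x - of_nat b) 0 n) = 1"
    by (simp add: det_mult[OF pascal toeplitz] det_pascal_mat det_binomial_toeplitz_0)
  finally show ?thesis by (simp add: prod_dividef)
qed

lemma minus_one_power_diff:
  "u \<le> m \<Longrightarrow> (-1 :: 'a :: ring_1) ^ (m - u) = (-1) ^ u * (-1) ^ m"
  by (auto simp: minus_one_power_iff even_diff_nat)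

definition alternating_binomial_toeplitz :: "'a :: field_char_0 \<Rightarrow> nat \<Rightarrow> nat \<Rightarrow> 'a mat" where
  "alternating_binomial_toeplitz x b n = mat n n (\<lambda>(i,j). (-1) ^ (b + j - i) * (x gchoose (b + j - i)))"

lemma det_alternating_binomial_toeplitz:
  assumes "n \<le> b + 1"
  shows "det (alternating_binomial_toeplitz x b n) = (-1) ^ (b * n) * det (binomial_toeplitz x b n)"
proof -
  have "alternating_binomial_toeplitz x b n =
      mat n n (\<lambda>(i,j). (-1) ^ i * (-1) ^ (b + j) * binomial_toeplitz x b n $$ (i,j))"
    by (rule eq_matI)
      (use assms in \<open>auto simp: alternating_binomial_toeplitz_def binomial_toeplitz_def minus_one_power_diff\<close>)
  then have "det (alternating_binomial_toeplitz x b n) =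
      (\<Prod>i<n. (-1) ^ i) * (\<Prod>j<n. (-1) ^ (b + j)) * det (binomial_toeplitz x b n)"
    by (simp add: det_scale_rows_cols binomial_toeplitz_def)
  moreover have "(\<Prod>i<n. (-1 :: 'a) ^ i) * (\<Prod>j<n. (-1) ^ (b + j)) = (-1) ^ (b * n)"
  proof -
    have "(\<Prod>j<n. (-1 :: 'a) ^ (b + j)) = (-1) ^ (b * n) * (\<Prod>j<n. (-1) ^ j)"
      by (simp add: power_add prod.distrib power_mult)
    moreover have "(\<Prod>i<n. (-1 :: 'a) ^ i) * (\<Prod>i<n. (-1) ^ i) = 1"
      by (simp add: prod.distrib[symmetric] power_add[symmetric])
    ultimately show ?thesis by (simp add: algebra_simps)
  qed
  ultimately show ?thesis by simp
qed

lemma p_unit_det_alternating_binomial_toeplitz_half: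
  assumes p: "prime p" "odd p" and a: "odd a" and "n \<le> b + 1" "b + n \<le> p"
    and "a + 2 * int n < int p + 2" and "2 * int b < int p + a + 2"
  shows "p_unit p (det (alternating_binomial_toeplitz (of_int a / 2) b n))"
proof -
  have "p_unit p ((of_int a / 2 + of_nat i) gchoose b)" if "i < n" for i
  proof -
    have "(of_int a / 2 + of_nat i :: rat) = of_int (a + 2 * int i) / 2" by simp
    then show ?thesis
      using that assms by (simp only:) (intro p_unit_gbinomial_half[OF p], auto)
  qed
  moreover have "p_unit p (of_nat (b + j choose b))" if "j < n" for j
    using that assms by (intro p_unit_binomial[OF p(1)]) auto
  ultimately have "p_unit p (det (binomial_toeplitz (of_int a / 2) b n))"
    unfolding det_binomial_toeplitz by (intro p_unit_divide[OF p(1)] p_unit_prod[OF p(1)]) auto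
  then show ?thesis
    unfolding det_alternating_binomial_toeplitz[OF \<open>n \<le> b + 1\<close>]
    using p_unit_mult p_unit_minus_one_power p(1) by blast
qed

section \<open>The sequence c_n at (0, 4, 0)\<close>

lemma alternating_gbinomial_Suc:
  fixes x :: "'a :: field_char_0"
  shows "of_nat (Suc j) * ((-1) ^ Suc j * (x gchoose Suc j)) = (of_nat j - x) * ((-1) ^ j * (x gchoose j))"
proof -
  have binomial_step: "of_nat (Suc j) * (x gchoose Suc j) = (x - of_nat j) * (x gchoose j)"
    using gbinomial_mult_1[of x j] by (simp add: algebra_simps)
  have "of_nat (Suc j) * ((-1) ^ Suc j * (x gchoose Suc j)) = - ((-1) ^ j * (of_nat (Suc j) * (x gchoose Suc j)))"
    by simp
  also have "\<dots> = (of_nat j - x) * ((-1) ^ j * (x gchoose j))"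
    unfolding binomial_step by (simp add: algebra_simps)
  finally show ?thesis .
qed

lemma cseq_0_4_0_Suc:
  "cseq r 0 4 0 (Suc m) =
    ((2 * of_nat m - 1 - 2 * of_nat r) * (if 1 \<le> m then cseq r 0 4 0 (m - 1) else 0)
     - (if 3 \<le> m then (of_nat m - 2 - 2 * of_nat r) * cseq r 0 4 0 (m - 3) else 0)) / of_nat (Suc m)"
  by (simp add: field_simps)

lemma cseq_0_4_0:
  "cseq r 0 4 0 n = (if even n then (-1) ^ (n div 2) * ((of_nat r - 1/2) gchoose (n div 2)) else 0)"
proof (induction n rule: less_induct)
  case (less n)
  define x :: rat where "x = of_nat r - 1/2"
  define d where "d j = (-1) ^ j * (x gchoose j)" for j
  have IH: "cseq r 0 4 0 m = (if even m then d (m div 2) else 0)" if "m < n" for m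
    using less[OF that] by (simp add: d_def x_def)
  have step: "of_nat (Suc j) * d (Suc j) = (of_nat j - x) * d j" for j
    unfolding d_def by (rule alternating_gbinomial_Suc)
  have "n = 0 \<or> odd n \<or> n = 2 \<or> (\<exists>j. n = Suc (2 * j + 3))" by presburger
  then consider "n = 0" | "odd n" | "n = 2" | j where "n = Suc (2 * j + 3)" by blast
  then show ?case
  proof cases
    case 1
    then show ?thesis by simp
  next
    case 2
    define m where "m = n - 1"
    have m: "n = Suc m" "even m" using 2 unfolding m_def by presburger+
    then have z1: "(if 1 \<le> m then cseq r 0 4 0 (m - 1) else 0) = 0"
      and z2: "(if 3 \<le> m then (of_nat m - 2 - 2 * of_nat r) * cseq r 0 4 0 (m - 3) else 0) = 0"
      using IH[of "m - 1"] IH[of "m - 3"] by auto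
    then show ?thesis using m unfolding m(1) cseq_0_4_0_Suc z1 z2 by simp
  next
    case 3
    then show ?thesis using step[of 0] by (simp add: cseq_0_4_0_Suc numeral_2_eq_2 d_def x_def)
  next
    case (4 j)
    have "cseq r 0 4 0 (2 * j + 2) = d (j + 1)" "cseq r 0 4 0 (2 * j) = d j"
      using IH[of "2 * j + 2"] IH[of "2 * j"] 4 by simp_all
    then have "cseq r 0 4 0 n = ((4 * of_nat j + 5 - 2 * of_nat r) * d (j + 1)
        - (2 * of_nat j + 1 - 2 * of_nat r) * d j) / (2 * of_nat j + 4)"
      unfolding 4 cseq_0_4_0_Suc by (simp add: algebra_simps del: cseq.simps)
    also have "\<dots> = d (j + 2)"
    proof -
      have s0: "(of_nat j + 1) * d (j + 1) = (of_nat j - x) * d j"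
        using step[of j] by (simp add: add.commute)
      have s1: "(of_nat j + 2) * d (j + 2) = (of_nat j + 1 - x) * d (j + 1)"
        using step[of "Suc j"] by (simp add: numeral_2_eq_2 add_ac)
      have "(2 * of_nat j + 4) * d (j + 2) = 2 * ((of_nat j + 2) * d (j + 2))"
        by (simp add: algebra_simps)
      also have "\<dots> = (4 * of_nat j + 4 - 2 * x) * d (j + 1) - 2 * ((of_nat j + 1) * d (j + 1))"
        unfolding s1 by (simp add: algebra_simps)
      also have "\<dots> = (4 * of_nat j + 5 - 2 * of_nat r) * d (j + 1) - (2 * of_nat j + 1 - 2 * of_nat r) * d j"
        unfolding s0 by (simp add: x_def algebra_simps)
      finally have "(2 * of_nat j + 4) * d (j + 2) =
          (4 * of_nat j + 5 - 2 * of_nat r) * d (j + 1) - (2 * of_nat j + 1 - 2 * of_nat r) * d j" .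
      then show ?thesis by (simp add: field_simps)
    qed
    finally show ?thesis using 4 by (simp add: d_def x_def)
  qed
qed

lemma Pk_eq_det_cseq:
  assumes "r \<ge> 1"
  shows "Pk r k a b g = det (mat k k (\<lambda>(i,j). cseq r a b g (k + 2 * r - 1 + j - i)))"
proof -
  have "cc r a b g (int k + 2 * int r - 1 + int j - int i) = cseq r a b g (k + 2 * r - 1 + j - i)"
    if "i < k" for i j
  proof -
    have "nat (int k + 2 * int r - 1 + int j - int i) = k + 2 * r - 1 + j - i"
      using that assms by linarith
    then show ?thesis using that assms unfolding cc_def by auto
  qed
  then show ?thesis unfolding Pk_def by (intro arg_cong[where f = det] eq_matI) auto
qed

lemma Pk_0_4_0_block_factorization:
  fixes r k :: nat
  assumes "r \<ge> 1"
  defines "N \<equiv> k + 2 * r - 1" and "h \<equiv> (k + 1) div 2" and "x \<equiv> of_nat r - 1/2 :: rat"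
  shows "Pk r k 0 4 0 = signof (parity_sort 0 k) * signof (parity_sort (N mod 2) k) *
    det (alternating_binomial_toeplitz x ((N + 1) div 2) h) *
    det (alternating_binomial_toeplitz x (N div 2) (k - h))"
proof -
  have "odd (N + k)" "k \<le> N + 1" using assms(1) unfolding N_def by presburger+
  note blocks = det_parity_toeplitz[OF this, of "\<lambda>m. (-1) ^ m * (x gchoose m)"]
  have "Pk r k 0 4 0 = det (mat k k (\<lambda>(i,j). cseq r 0 4 0 (N + j - i)))"
    unfolding Pk_eq_det_cseq[OF assms(1)] N_def ..
  also have "\<dots> = det (mat k k (\<lambda>(i,j).
      if even (N + j - i) then (-1) ^ ((N + j - i) div 2) * (x gchoose ((N + j - i) div 2)) else 0))"
    unfolding cseq_0_4_0 x_def ..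
  also have "\<dots> = signof (parity_sort 0 k) * signof (parity_sort (N mod 2) k) *
      det (alternating_binomial_toeplitz x ((N + 1) div 2) h) *
      det (alternating_binomial_toeplitz x (N div 2) (k - h))"
    using blocks unfolding alternating_binomial_toeplitz_def h_def by simp
  finally show ?thesis .
qed

theorem proposition4p3:
  fixes r k p :: nat
  assumes "r \<ge> 1" and "k \<ge> 1"
    and "prime p" and "odd p" and "p > k + 2 * r - 2"
  shows "nonzero_mod p (Pk r k 0 4 0)"
proof -
  define N where "N = k + 2 * r - 1"
  define h where "h = (k + 1) div 2"
  define x :: rat where "x = of_int (2 * int r - 1) / 2"
  have "x = of_nat r - 1/2" using assms(1) by (simp add: x_def)
  then have P: "Pk r k 0 4 0 = signof (parity_sort 0 k) * signof (parity_sort (N mod 2) k) *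
      det (alternating_binomial_toeplitz x ((N + 1) div 2) h) *
      det (alternating_binomial_toeplitz x (N div 2) (k - h))"
    unfolding N_def h_def using Pk_0_4_0_block_factorization[OF assms(1)] by simp
  have odd: "odd (2 * int r - 1)" using assms(1) by presburger
  have bounds: "1 \<le> r" "N + 1 = k + 2 * r" "k + 2 * r \<le> p + 1" using assms unfolding N_def by auto
  have halves: "k \<le> 2 * h" "2 * h \<le> k + 1" "N \<le> 2 * ((N + 1) div 2)" "2 * ((N + 1) div 2) \<le> N + 1"
    "N \<le> 2 * (N div 2) + 1" "2 * (N div 2) \<le> N" unfolding h_def by presburger+
  have "p_unit p (det (alternating_binomial_toeplitz x ((N + 1) div 2) h))"
    unfolding x_def using bounds halves
    by (intro p_unit_det_alternating_binomial_toeplitz_half[OF assms(3,4) odd]) linarith+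
  moreover have "p_unit p (det (alternating_binomial_toeplitz x (N div 2) (k - h)))"
    unfolding x_def using bounds halves
    by (intro p_unit_det_alternating_binomial_toeplitz_half[OF assms(3,4) odd]) linarith+
  ultimately have "p_unit p (Pk r k 0 4 0)"
    unfolding P using assms(3) by (intro p_unit_mult p_unit_signof)
  then show ?thesis by (rule p_unit_imp_nonzero_mod[OF assms(3)])
qed

end
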